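(* Let $n$ and $s$ be sufficiently large and $0<p,\varepsilon<1$. Suppose $G$ is an $n$-vertex $(\varepsilon,s)$-expander and $\varepsilon ps\ge10^5(\log n)^3$. Let $H$ be the random spanning subgraph of $G$ (with $V(H)=V(G)$) containing each edge of $G$ independently with probability $p$, and let $s'=\frac{\varepsilon ps}{10^4(\log n)^2}$. Then the probability that $H$ is not an $(\frac{\varepsilon}{4},s')$-expander is less than $2/n$.
   Context: Logarithms are base 2. For $U\subseteq V(G)$, $N_G(U)$ is the set of vertices outside $U$ with a neighbour in $U$; $G-F$ is $G$ with edge set $F$ deleted. An $n$-vertex graph $G$ is an $(\varepsilon,s)$-expander if for every $U\subseteq V(G)$, $F\subseteq E(G)$ with $1\le|U|\le\frac23n$ and $|F|\le s|U|$ we have $|N_{G-F}(U)|\ge\varepsilon|U|/(\log n)^2$. *)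

theory Defs
  imports Complex_Main
begin

definition simple_graph :: "'a set \<Rightarrow> 'a set set \<Rightarrow> bool" where
  "simple_graph V E \<longleftrightarrow> finite V \<and> (\<forall>e\<in>E. e \<subseteq> V \<and> card e = 2)"

definition nbhd :: "'a set \<Rightarrow> 'a set set \<Rightarrow> 'a set \<Rightarrow> 'a set" where
  "nbhd V E U = {v \<in> V - U. \<exists>u\<in>U. {u, v} \<in> E}"

definition expander :: "real \<Rightarrow> real \<Rightarrow> 'a set \<Rightarrow> 'a set set \<Rightarrow> bool" where
  "expander eps s V E \<longleftrightarrow>
     (\<forall>U F. U \<subseteq> V \<and> F \<subseteq> E \<and> 1 \<le> card U \<and> real (card U) \<le> 2/3 * real (card V)
        \<and> real (card F) \<le> s * real (card U)
        \<longrightarrow> real (card (nbhd V (E - F) U)) \<ge> eps * real (card U) / (log 2 (real (card V)))^2)"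

text \<open>Probability that the random spanning subgraph of (V,E), keeping each edge
independently with probability p, has property P (P applied to its edge set).\<close>
definition rand_subgraph_prob :: "real \<Rightarrow> 'a set set \<Rightarrow> ('a set set \<Rightarrow> bool) \<Rightarrow> real" where
  "rand_subgraph_prob p E P =
     (\<Sum>H\<in>{H. H \<subseteq> E \<and> P H}. p ^ card H * (1 - p) ^ card (E - H))"

end

theory Submission imports Defs begin

text \<open>If the random subgraph H fails to expand, some admissible U together with a set X of fewer
than (\<epsilon>/4)|U|/(log n)^2 vertices has the property that H keeps at most s'|U| of the edges of G
from U to V - (U \<union> X), while by the expansion of G there are more than s|U| such edges. A
Chernoff-type bound gives this event probability at most exp(-ps|U|/4) \<le> n^(-9|U|), and the
union bound over all pairs (U, X), weighted by n^(-1-4|U|-4|X|), sums to (1 + n^(-4))^(2n)/n < 2/n.\<close>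

definition subgraph_weight :: "real \<Rightarrow> 'a set \<Rightarrow> 'a set \<Rightarrow> real" where
  "subgraph_weight p E H = p ^ card H * (1 - p) ^ card (E - H)"

lemma subgraph_weight_nonneg: "0 \<le> p \<Longrightarrow> p \<le> 1 \<Longrightarrow> 0 \<le> subgraph_weight p E H"
  unfolding subgraph_weight_def by simp

lemma rand_subgraph_prob_eq_sum_Pow:
  assumes "finite E"
  shows "rand_subgraph_prob p E P = (\<Sum>H\<in>Pow E. if P H then subgraph_weight p E H else 0)"
proof -
  have "{H. H \<subseteq> E \<and> P H} = {H\<in>Pow E. P H}" by auto
  then show ?thesis
    unfolding rand_subgraph_prob_def subgraph_weight_def
    using sum.inter_filter[of "Pow E"] assms by simp
qed

lemma rand_subgraph_prob_union_bound:
  assumes fE: "finite E" and fI: "finite I" and p: "0 \<le> p" "p \<le> 1"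
    and cover: "\<And>H. H \<subseteq> E \<Longrightarrow> P H \<Longrightarrow> \<exists>i\<in>I. Q i H"
  shows "rand_subgraph_prob p E P \<le> (\<Sum>i\<in>I. rand_subgraph_prob p E (Q i))"
proof -
  let ?w = "subgraph_weight p E"
  have "rand_subgraph_prob p E P = (\<Sum>H\<in>Pow E. if P H then ?w H else 0)"
    using rand_subgraph_prob_eq_sum_Pow[OF fE] .
  also have "\<dots> \<le> (\<Sum>H\<in>Pow E. \<Sum>i\<in>I. if Q i H then ?w H else 0)"
  proof (rule sum_mono)
    fix H assume H: "H \<in> Pow E"
    have w: "0 \<le> ?w H" using subgraph_weight_nonneg[OF p] .
    show "(if P H then ?w H else 0) \<le> (\<Sum>i\<in>I. if Q i H then ?w H else 0)"
    proof (cases "P H")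
      case True
      then obtain i where i: "i \<in> I" "Q i H" using cover H by blast
      have "(if Q i H then ?w H else 0) \<le> (\<Sum>i\<in>I. if Q i H then ?w H else 0)"
        by (rule member_le_sum[OF i(1)]) (use w fI in auto)
      then show ?thesis using True i by simp
    qed (use w in \<open>auto intro!: sum_nonneg\<close>)
  qed
  also have "\<dots> = (\<Sum>i\<in>I. \<Sum>H\<in>Pow E. if Q i H then ?w H else 0)" by (rule sum.swap)
  also have "\<dots> = (\<Sum>i\<in>I. rand_subgraph_prob p E (Q i))"
    using rand_subgraph_prob_eq_sum_Pow[OF fE] by simp
  finally show ?thesis .
qed

lemma sum_Pow_subgraph_weight_power_card_Int:
  assumes fE: "finite E" and B: "B \<subseteq> E"
  shows "(\<Sum>H\<in>Pow E. subgraph_weight p E H * a ^ card (H \<inter> B)) = (1 - p + p * a) ^ card B"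
proof -
  let ?f = "\<lambda>e. if e \<in> B then a else 1"
  have "(\<Prod>e\<in>E. p * ?f e + (1 - p))
      = (\<Sum>H\<in>Pow E. (\<Prod>e\<in>H. p * ?f e) * (\<Prod>e\<in>E - H. 1 - p))"
    by (rule prod_add[OF fE])
  also have "\<dots> = (\<Sum>H\<in>Pow E. subgraph_weight p E H * a ^ card (H \<inter> B))"
  proof (rule sum.cong[OF refl])
    fix H assume "H \<in> Pow E"
    then have fH: "finite H" using fE finite_subset by auto
    have "(\<Prod>e\<in>H. p * ?f e) = p ^ card H * a ^ card (H \<inter> B)"
      using prod.If_cases[OF fH, of "\<lambda>e. e \<in> B" "\<lambda>_. a" "\<lambda>_. 1"]
      by (simp add: prod.distrib Int_def)
    then show "(\<Prod>e\<in>H. p * ?f e) * (\<Prod>e\<in>E - H. 1 - p)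
        = subgraph_weight p E H * a ^ card (H \<inter> B)"
      unfolding subgraph_weight_def by simp
  qed
  also have "(\<Prod>e\<in>E. p * ?f e + (1 - p)) = (\<Prod>e\<in>E. if e \<in> B then 1 - p + p * a else 1)"
    by (rule prod.cong) auto
  finally have "(\<Sum>H\<in>Pow E. subgraph_weight p E H * a ^ card (H \<inter> B))
      = (\<Prod>e\<in>E. if e \<in> B then 1 - p + p * a else 1)" ..
  also have "\<dots> = (1 - p + p * a) ^ card (E \<inter> B)"
    using prod.If_cases[OF fE, of "\<lambda>e. e \<in> B" "\<lambda>_. 1 - p + p * a" "\<lambda>_. 1"]
    by (simp add: Int_def)
  finally show ?thesis using B by (simp add: Int_absorb1)
qed

text \<open>Markov's inequality for exp(-|H \<inter> B|), using 1 - p + p/e \<le> exp(-p/2).\<close>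
lemma rand_subgraph_prob_card_Int_le:
  assumes fE: "finite E" and B: "B \<subseteq> E" and p: "0 \<le> p" "p \<le> 1"
  shows "rand_subgraph_prob p E (\<lambda>H. real (card (H \<inter> B)) \<le> t)
    \<le> exp (t - p * real (card B) / 2)"
proof -
  let ?w = "subgraph_weight p E" and ?a = "exp (-1) :: real"
  have "rand_subgraph_prob p E (\<lambda>H. real (card (H \<inter> B)) \<le> t)
     = (\<Sum>H\<in>Pow E. if real (card (H \<inter> B)) \<le> t then ?w H else 0)"
    using rand_subgraph_prob_eq_sum_Pow[OF fE] .
  also have "\<dots> \<le> (\<Sum>H\<in>Pow E. exp t * (?w H * ?a ^ card (H \<inter> B)))"
  proof (rule sum_mono)
    fix H
    have w: "0 \<le> ?w H" using subgraph_weight_nonneg[OF p] .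
    have e: "exp t * (?w H * ?a ^ card (H \<inter> B)) = ?w H * exp (t - real (card (H \<inter> B)))"
      by (simp add: exp_of_nat_mult[symmetric] exp_diff exp_minus field_simps)
    show "(if real (card (H \<inter> B)) \<le> t then ?w H else 0) \<le> exp t * (?w H * ?a ^ card (H \<inter> B))"
      unfolding e using w mult_left_mono[of 1 "exp (t - real (card (H \<inter> B)))" "?w H"] by auto
  qed
  also have "\<dots> = exp t * (1 - p + p * ?a) ^ card B"
    by (simp add: sum_distrib_left[symmetric] sum_Pow_subgraph_weight_power_card_Int[OF fE B])
  also have "\<dots> \<le> exp t * exp (- p / 2) ^ card B"
  proof -
    have "2 \<le> exp (1::real)" using exp_ge_add_one_self[of 1] by simp
    then have "?a \<le> 1/2" by (simp add: exp_minus field_simps)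
    then have "1 - p + p * ?a \<le> 1 + (- p / 2)" using p mult_left_mono[of ?a "1/2" p] by linarith
    also have "\<dots> \<le> exp (- p / 2)" by (rule exp_ge_add_one_self)
    finally show ?thesis using p by (intro mult_left_mono power_mono) auto
  qed
  also have "\<dots> = exp (t - p * real (card B) / 2)"
    by (simp add: exp_of_nat_mult[symmetric] exp_add[symmetric] algebra_simps)
  finally show ?thesis .
qed

definition test_pair :: "real \<Rightarrow> 'a set \<Rightarrow> 'a set \<Rightarrow> 'a set \<Rightarrow> bool" where
  "test_pair eps V U X \<longleftrightarrow> U \<subseteq> V \<and> 1 \<le> card U \<and> real (card U) \<le> 2/3 * real (card V)
     \<and> X \<subseteq> V \<and> real (card X) < eps * real (card U) / (log 2 (real (card V)))^2"

text \<open>The edges that must be deleted to confine the neighbourhood of U to X.\<close>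
definition boundary_edges :: "'a set \<Rightarrow> 'a set set \<Rightarrow> 'a set \<Rightarrow> 'a set \<Rightarrow> 'a set set" where
  "boundary_edges V E U X = {e\<in>E. \<exists>u\<in>U. \<exists>v\<in>V - (U \<union> X). e = {u, v}}"

lemma test_pair_mono:
  assumes "test_pair eps' V U X" "eps' \<le> eps"
  shows "test_pair eps V U X"
proof -
  have "eps' * real (card U) / (log 2 (real (card V)))^2 \<le> eps * real (card U) / (log 2 (real (card V)))^2"
    using assms(2) by (intro divide_right_mono mult_right_mono) auto
  then show ?thesis using assms(1) unfolding test_pair_def by linarith
qed

lemma test_pair_card_le:
  assumes "test_pair eps V U X" "eps \<le> 1" "2 \<le> card V"
  shows "card X \<le> card U"
proof -
  define L where "L = log 2 (real (card V))"
  have "1 \<le> L" unfolding L_def using assms(3) by simp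
  then have L: "1 \<le> L^2" by (simp add: one_le_power)
  have "eps * real (card U) \<le> real (card U) * L^2"
    using mult_right_mono[OF assms(2), of "real (card U)"] mult_left_mono[OF L, of "real (card U)"]
    by simp
  then have "eps * real (card U) / L^2 \<le> real (card U)" using L by (simp add: divide_le_eq)
  then have "real (card X) < real (card U)" using assms(1) unfolding test_pair_def L_def by linarith
  then show ?thesis by simp
qed

lemma expander_card_boundary_edges:
  assumes ex: "expander eps s V E" and fV: "finite V" and UX: "test_pair eps V U X"
  shows "s * real (card U) < real (card (boundary_edges V E U X))"
proof (rule ccontr)
  let ?B = "boundary_edges V E U X"
  assume "\<not> ?thesis"
  moreover have "?B \<subseteq> E" unfolding boundary_edges_def by auto
  ultimately have "real (card (nbhd V (E - ?B) U)) \<ge> eps * real (card U) / (log 2 (real (card V)))^2"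
    using ex[unfolded expander_def, rule_format, of U ?B] UX unfolding test_pair_def by auto
  moreover have "nbhd V (E - ?B) U \<subseteq> X"
    unfolding nbhd_def boundary_edges_def by blast
  then have "card (nbhd V (E - ?B) U) \<le> card X"
    using UX fV unfolding test_pair_def by (meson card_mono finite_subset)
  ultimately show False using UX unfolding test_pair_def by linarith
qed

lemma not_expander_obtains_test_pair:
  assumes fE: "finite E" and H: "H \<subseteq> E" and "\<not> expander eps s V H"
  obtains U X where "test_pair eps V U X"
    "real (card (H \<inter> boundary_edges V E U X)) \<le> s * real (card U)"
proof -
  obtain U F where U: "U \<subseteq> V" "1 \<le> card U" "real (card U) \<le> 2/3 * real (card V)"
    and F: "F \<subseteq> H" "real (card F) \<le> s * real (card U)"
    and X: "real (card (nbhd V (H - F) U)) < eps * real (card U) / (log 2 (real (card V)))^2"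
    using assms(3) unfolding expander_def by (auto simp: not_le)
  define X where "X = nbhd V (H - F) U"
  have "H \<inter> boundary_edges V E U X \<subseteq> F"
    unfolding X_def nbhd_def boundary_edges_def by blast
  moreover have "finite F" using F(1) H fE by (meson finite_subset)
  ultimately have "card (H \<inter> boundary_edges V E U X) \<le> card F" by (rule card_mono[rotated])
  moreover have "test_pair eps V U X"
    using U X unfolding test_pair_def X_def nbhd_def by auto
  ultimately show ?thesis using F(2) that by fastforce
qed

lemma rand_subgraph_prob_not_expander_le:
  assumes fE: "finite E" and fV: "finite V" and p: "0 \<le> p" "p \<le> 1"
  shows "rand_subgraph_prob p E (\<lambda>H. \<not> expander eps s V H)
    \<le> (\<Sum>(U, X)\<in>{(U, X)\<in>Pow V \<times> Pow V. test_pair eps V U X}.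
          rand_subgraph_prob p E (\<lambda>H. real (card (H \<inter> boundary_edges V E U X)) \<le> s * real (card U)))"
    (is "_ \<le> (\<Sum>(U, X)\<in>?I. rand_subgraph_prob p E (?sparse U X))")
proof -
  have "rand_subgraph_prob p E (\<lambda>H. \<not> expander eps s V H)
      \<le> (\<Sum>i\<in>?I. rand_subgraph_prob p E (case_prod ?sparse i))"
  proof (rule rand_subgraph_prob_union_bound[OF fE _ p])
    show "finite ?I" using fV by (auto intro: finite_subset[of _ "Pow V \<times> Pow V"])
    fix H assume "H \<subseteq> E" "\<not> expander eps s V H"
    then obtain U X where "test_pair eps V U X" "?sparse U X H"
      by (rule not_expander_obtains_test_pair[OF fE])
    then show "\<exists>i\<in>?I. case_prod ?sparse i H" unfolding test_pair_def by auto
  qed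
  then show ?thesis by (simp add: split_def)
qed

lemma exp_le_inverse_power:
  assumes n: "1 \<le> n" and a: "36 * ln n \<le> a" and k: "1 \<le> k" and j: "j \<le> k"
  shows "exp (- (a * real k / 4)) \<le> (1 / n) ^ (1 + 4 * k + 4 * j)"
proof -
  have "exp (- (a * real k / 4)) \<le> exp (real (9 * k) * (- ln n))"
    using mult_right_mono[OF a, of "real k"] by (simp add: mult_ac)
  also have "\<dots> = exp (- ln n) ^ (9 * k)" by (rule exp_of_nat_mult)
  also have "\<dots> = (1 / n) ^ (9 * k)" using n by (simp add: exp_minus inverse_eq_divide)
  also have "\<dots> \<le> (1 / n) ^ (1 + 4 * k + 4 * j)"
    using n k j by (intro power_decreasing) auto
  finally show ?thesis .
qed

lemma rand_subgraph_prob_boundary_sparse: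
  fixes n :: nat
  assumes fE: "finite E" and p: "0 \<le> p" "p \<le> 1" and ex: "expander eps s V E" and eps: "eps \<le> 1"
    and fV: "finite V" and cV: "card V = n" and n: "2 \<le> n" and UX: "test_pair eps V U X"
    and s': "s' \<le> p * s / 4" and ps: "36 * ln (real n) \<le> p * s"
  shows "rand_subgraph_prob p E
      (\<lambda>H. real (card (H \<inter> boundary_edges V E U X)) \<le> s' * real (card U))
    \<le> (1 / real n) ^ (1 + 4 * card U + 4 * card X)"
proof -
  let ?B = "boundary_edges V E U X" and ?k = "real (card U)"
  have "?B \<subseteq> E" unfolding boundary_edges_def by auto
  then have "rand_subgraph_prob p E (\<lambda>H. real (card (H \<inter> ?B)) \<le> s' * ?k)
      \<le> exp (s' * ?k - p * real (card ?B) / 2)"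
    using rand_subgraph_prob_card_Int_le[OF fE _ p] by blast
  also have "\<dots> \<le> exp (- (p * s * ?k / 4))"
  proof -
    have "s' * ?k \<le> p * s / 4 * ?k" using s' by (intro mult_right_mono) auto
    moreover have "p * (s * ?k) \<le> p * real (card ?B)"
      using expander_card_boundary_edges[OF ex fV UX] p by (intro mult_left_mono) auto
    ultimately show ?thesis by (simp add: algebra_simps)
  qed
  also have "\<dots> \<le> (1 / real n) ^ (1 + 4 * card U + 4 * card X)"
    using exp_le_inverse_power[OF _ ps] test_pair_card_le[OF UX eps] UX n cV
    unfolding test_pair_def by simp
  finally show ?thesis .
qed

lemma sum_Pow_power_card: "finite V \<Longrightarrow> (\<Sum>U\<in>Pow V. (y::real) ^ card U) = (1 + y) ^ card V"
  using prod_add[of V "\<lambda>_. y" "\<lambda>_. 1"] by (simp add: add.commute)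

lemma sum_Pow_Pow_inverse_power_less:
  assumes n: "4 \<le> real n" and fV: "finite V" and cV: "card V = n"
  shows "(\<Sum>(U, X)\<in>Pow V \<times> Pow V. (1 / real n) ^ (1 + 4 * card U + 4 * card X)) < 2 / real n"
proof -
  define y where "y = (1 / real n) ^ 4"
  have y: "0 \<le> y" "real n * y \<le> 1/64"
  proof -
    have "real n * y = 1 / real n ^ 3"
      unfolding y_def by (simp add: power_divide eval_nat_numeral)
    moreover have "1 / real n ^ 3 \<le> 1 / 4 ^ 3"
      using n by (intro divide_left_mono power_mono) auto
    ultimately show "0 \<le> y" "real n * y \<le> 1/64" unfolding y_def by auto
  qed
  have "(\<Sum>(U, X)\<in>Pow V \<times> Pow V. (1 / real n) ^ (1 + 4 * card U + 4 * card X))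
      = (\<Sum>U\<in>Pow V. \<Sum>X\<in>Pow V. 1 / real n * (y ^ card U * y ^ card X))"
    unfolding y_def by (simp add: sum.cartesian_product power_add power_mult)
  also have "\<dots> = 1 / real n * (\<Sum>U\<in>Pow V. \<Sum>X\<in>Pow V. y ^ card U * y ^ card X)"
    by (simp only: sum_distrib_left)
  also have "\<dots> = 1 / real n * ((\<Sum>U\<in>Pow V. y ^ card U) * (\<Sum>X\<in>Pow V. y ^ card X))"
    by (simp only: sum_product)
  also have "\<dots> = 1 / real n * (1 + y) ^ (2 * n)"
    using sum_Pow_power_card[OF fV] cV by (simp add: power_mult_distrib power_add mult_2)
  also have "\<dots> < 1 / real n * 2"
  proof -
    have "(1 + y) ^ (2 * n) \<le> exp y ^ (2 * n)" using y by (intro power_mono) (auto simp: add.commute)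
    also have "\<dots> = exp (2 * (real n * y))" by (simp add: exp_of_nat_mult[symmetric] mult_ac)
    also have "\<dots> \<le> 1 + 2 * norm (2 * (real n * y))"
      using exp_bound_lemma[of "2 * (real n * y)"] y n by simp
    also have "\<dots> < 2" using y n by simp
    finally show ?thesis using mult_strict_left_mono[of _ 2 "1 / real n"] n by simp
  qed
  finally show ?thesis by simp
qed

lemma ln_le_log2: "1 \<le> x \<Longrightarrow> ln x \<le> log 2 x"
  unfolding log_def using ln_2_less_1 mult_left_mono[of "ln 2" 1 "ln x"] by (simp add: le_divide_eq)

lemma expander_parameter_bounds:
  fixes n :: nat
  assumes n: "2 \<le> n" and eps: "0 < eps" "eps < 1" and p: "0 < p"
    and big: "10^5 * (log 2 (real n))^3 \<le> eps * p * s"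
  shows "36 * ln (real n) \<le> p * s"
    and "eps * p * s / (10^4 * (log 2 (real n))^2) \<le> p * s / 4"
proof -
  define L where "L = log 2 (real n)"
  have L: "1 \<le> L" unfolding L_def using n by simp
  then have "1 \<le> L^2" by (simp add: one_le_power)
  then have "L \<le> L^3" using mult_left_mono[of 1 "L^2" L] L by (simp add: power3_eq_cube power2_eq_square)
  have "0 \<le> 10^5 * L^3" using L by simp
  then have eps_ps: "0 \<le> eps * (p * s)" using big unfolding L_def by (metis mult.assoc order_trans)
  then have ps_nonneg: "0 \<le> p * s" using eps by (simp add: zero_le_mult_iff)
  then have eps_ps_le: "eps * (p * s) \<le> p * s" using eps by (intro mult_left_le_one_le) auto
  then have ps: "10^5 * L^3 \<le> p * s" using big unfolding L_def by (simp add: mult.assoc)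
  show "36 * ln (real n) \<le> p * s"
  proof -
    have "ln (real n) \<le> L" using ln_le_log2[of "real n"] n unfolding L_def by simp
    then show ?thesis using ps \<open>L \<le> L^3\<close> L by simp
  qed
  have "eps * p * s / (10^4 * L^2) \<le> eps * p * s / 10^4"
    using \<open>1 \<le> L^2\<close> eps_ps by (intro divide_left_mono) (auto simp: mult.assoc)
  also have "\<dots> \<le> p * s / 4" using eps_ps_le ps_nonneg by (simp add: mult.assoc)
  finally show "eps * p * s / (10^4 * (log 2 (real n))^2) \<le> p * s / 4" unfolding L_def .
qed

theorem mainTheorem17:
  shows "\<exists>N::real. \<forall>(n::nat) (s::real) (p::real) (eps::real) (V::'a set) (E::'a set set).
     real n \<ge> N \<longrightarrow> s \<ge> N \<longrightarrow> 0 < p \<longrightarrow> p < 1 \<longrightarrow> 0 < eps \<longrightarrow> eps < 1 \<longrightarrow>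
     simple_graph V E \<longrightarrow> card V = n \<longrightarrow> expander eps s V E \<longrightarrow>
     eps * p * s \<ge> 10^5 * (log 2 (real n))^3 \<longrightarrow>
     rand_subgraph_prob p E
       (\<lambda>H. \<not> expander (eps / 4) (eps * p * s / (10^4 * (log 2 (real n))^2)) V H)
     < 2 / real n"
proof (rule exI[of _ 4], intro allI impI)
  fix n :: nat and s p eps :: real and V :: "'a set" and E :: "'a set set"
  assume n: "real n \<ge> 4" and "s \<ge> 4" \<comment> \<open>not needed: the density hypothesis suffices\<close>
    and p: "0 < p" "p < 1" and eps: "0 < eps" "eps < 1"
    and sg: "simple_graph V E" and cV: "card V = n" and ex: "expander eps s V E"
    and big: "eps * p * s \<ge> 10^5 * (log 2 (real n))^3"
  let ?s' = "eps * p * s / (10^4 * (log 2 (real n))^2)"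
  let ?I = "{(U, X)\<in>Pow V \<times> Pow V. test_pair (eps / 4) V U X}"
  have fV: "finite V" and fE: "finite E"
    using sg unfolding simple_graph_def by (auto intro: finite_subset[of E "Pow V"])
  have "2 \<le> n" using n by simp
  note bounds = expander_parameter_bounds[OF this eps p(1) big]
  have "rand_subgraph_prob p E (\<lambda>H. \<not> expander (eps / 4) ?s' V H)
      \<le> (\<Sum>(U, X)\<in>?I. rand_subgraph_prob p E
            (\<lambda>H. real (card (H \<inter> boundary_edges V E U X)) \<le> ?s' * real (card U)))"
    by (rule rand_subgraph_prob_not_expander_le[OF fE fV]) (use p in auto)
  also have "\<dots> \<le> (\<Sum>(U, X)\<in>?I. (1 / real n) ^ (1 + 4 * card U + 4 * card X))"
  proof (rule sum_mono, clarify)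
    fix U X assume "U \<subseteq> V" "X \<subseteq> V" "test_pair (eps / 4) V U X"
    then have "test_pair eps V U X" using test_pair_mono[of "eps / 4" V U X eps] eps by simp
    with p eps show "rand_subgraph_prob p E
        (\<lambda>H. real (card (H \<inter> boundary_edges V E U X)) \<le> ?s' * real (card U))
      \<le> (1 / real n) ^ (1 + 4 * card U + 4 * card X)"
      by (intro rand_subgraph_prob_boundary_sparse[OF fE _ _ ex _ fV cV \<open>2 \<le> n\<close> _ bounds(2,1)]) auto
  qed
  also have "\<dots> \<le> (\<Sum>(U, X)\<in>Pow V \<times> Pow V. (1 / real n) ^ (1 + 4 * card U + 4 * card X))"
    using fV by (intro sum_mono2) auto
  also have "\<dots> < 2 / real n" using sum_Pow_Pow_inverse_power_less[OF n fV cV] .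
  finally show "rand_subgraph_prob p E (\<lambda>H. \<not> expander (eps / 4) ?s' V H) < 2 / real n" .
qed

end
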